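(* Let $n$ be a non-negative integer. Then \[ \zeta(2n+3)=\frac{1}{2n+2}\sum_{j=0}^{n}(3j+5)\sum_{k=1}^{\infty}\frac{(-1)^{k-1}}{k^{2j+3}\binom{2k}{k}}\sum_{r=0}^{n-j}(-4)^r e_r^{(2)}(k)\,g_{n-j-r}^{(2)}(k). \]
   Context: For positive integers $r,s,k$: $e_r^{(s)}(k)$ is the coefficient of $t^r$ in $\prod_{j=1}^{k-1}(1+j^{-s}t)$ (equivalently $\sum_{1\le j_1<\cdots<j_r\le k-1}(j_1\cdots j_r)^{-s}$, with $e_0^{(s)}(k)=1$), and $g_r^{(s)}(k)$ is the coefficient of $t^r$ in $\prod_{j=1}^{k-1}(1-j^{-s}t)^{-2}$. *)

theory Defs
  imports "HOL-Analysis.Analysis" "HOL-Computational_Algebra.Formal_Power_Series"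
begin

text \<open>Riemann zeta at a positive integer s (meant for s \<ge> 2): sum over k \<ge> 1 of k^(-s).\<close>
definition zeta_nat :: "nat \<Rightarrow> real" where
  "zeta_nat s = (\<Sum>k. 1 / (real (Suc k)) ^ s)"

definition e_coeff :: "nat \<Rightarrow> nat \<Rightarrow> nat \<Rightarrow> real" where
  "e_coeff s k r = fps_nth (\<Prod>j\<in>{1..<k}. 1 + fps_const (1 / real j ^ s) * fps_X) r"

definition g_coeff :: "nat \<Rightarrow> nat \<Rightarrow> nat \<Rightarrow> real" where
  "g_coeff s k r = fps_nth (\<Prod>j\<in>{1..<k}. inverse ((1 - fps_const (1 / real j ^ s) * fps_X) ^ 2)) r"

end

theory Submission
  imports Defs
begin

text \<open>
  The power series \<open>G(i,k)\<close> and \<open>F(i,k)\<close> in \<open>X\<close> defined below form a Wilf--Zeilberger pair,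
  \<open>G(i+1,k) - G(i,k+1) = F(i,k) - F(i+1,k)\<close>. The first column is
  \<open>G(i,0) = (i+1) / ((i+1)^2 - X)^2\<close>, so the coefficient of \<open>X^n\<close> in its sum over \<open>i\<close> is
  \<open>(n+1) zeta(2n+3)\<close>. Summing the WZ relation over \<open>i\<close> (the \<open>F\<close>-terms telescope) shows that the
  column sums \<open>T(k)\<close> satisfy \<open>T(k) - T(k+1) = G(0,k) + F(0,k)\<close>, and since \<open>T(k) \<rightarrow> 0\<close> the first
  column sum equals \<open>\<Sum>k. G(0,k) + F(0,k)\<close>. Up to a constant, \<open>G(0,k) + F(0,k)\<close> is
  \<open>\<Prod>l\<le>k. (1 - 4X/l^2)\<close> times \<open>\<Prod>j\<le>k. (1 - X/j^2)^-2\<close> times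
  \<open>(5 - 2X/(k+1)^2) / (1 - X/(k+1)^2)^2 = \<Sum>j. (3j+5) X^j/(k+1)^(2j)\<close>; the two products generate
  \<open>(-4)^r e_r\<close> and \<open>g_r\<close>, which gives the right-hand side.

  All limits are taken coefficientwise. They are justified by
  \<open>|[X^n] G(i,k)| \<le> C_n / ((i+1)^3 (k+1)^3)\<close> and \<open>|[X^n] F(i,k)| \<le> C_n (k+2)^2 / (i+1)^2\<close>,
  which follow from the submultiplicative norm \<open>\<Sum>i\<le>n. |f_i|\<close> on power series.
\<close>

section \<open>Geometric factors and truncated coefficient norms\<close>

definition lin_factor :: "'a::field \<Rightarrow> 'a fps" where
  "lin_factor c = 1 - fps_const c * fps_X"

lemma fps_nth_lin_factor_0 [simp]: "fps_nth (lin_factor c) 0 = 1"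
  by (simp add: lin_factor_def)

lemma inverse_lin_factor: "inverse (lin_factor c) = Abs_fps (\<lambda>n. c ^ n)"
proof (rule fps_inverse_unique, rule fps_ext)
  fix n
  have "lin_factor c * Abs_fps (\<lambda>n. c ^ n) = Abs_fps (\<lambda>n. c ^ n) - fps_const c * (fps_X * Abs_fps (\<lambda>n. c ^ n))"
    by (simp add: lin_factor_def algebra_simps)
  then show "fps_nth (lin_factor c * Abs_fps (\<lambda>n. c ^ n)) n = fps_nth 1 n"
    by (cases n) simp_all
qed

lemma fps_nth_inverse_lin_factor_sq: "fps_nth (inverse (lin_factor c ^ 2)) n = of_nat (Suc n) * c ^ n"
proof -
  have "fps_nth (inverse (lin_factor c ^ 2)) n = (\<Sum>i=0..n. c ^ i * c ^ (n - i))"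
    by (simp add: fps_inverse_mult fps_mult_nth inverse_lin_factor power2_eq_square)
  also have "\<dots> = (\<Sum>i=0..n. c ^ n)"
    by (intro sum.cong refl) (simp add: power_add [symmetric])
  finally show ?thesis by simp
qed

lemma lin_factor_weight_series:
  fixes c :: "'a::field"
  shows "(5 - fps_const (2 * c) * fps_X) * inverse (lin_factor c ^ 2) = Abs_fps (\<lambda>j. (3 * of_nat j + 5) * c ^ j)"
proof -
  define v where "v = lin_factor c"
  have v: "v * inverse v = 1"
    unfolding v_def by (rule inverse_mult_eq_1') simp
  have "5 - fps_const (2 * c) * fps_X = 3 + 2 * v"
    unfolding v_def lin_factor_def by (simp add: algebra_simps numeral_fps_const flip: fps_const_mult)
  then have "(5 - fps_const (2 * c) * fps_X) * inverse (v ^ 2) = (3 + 2 * v) * (inverse v * inverse v)"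
    by (simp add: power2_eq_square fps_inverse_mult)
  also have "\<dots> = 3 * inverse (v ^ 2) + 2 * inverse v"
    using v by (simp add: power2_eq_square fps_inverse_mult) algebra
  also have "\<dots> = Abs_fps (\<lambda>j. (3 * of_nat j + 5) * c ^ j)"
    unfolding v_def numeral_fps_const
    by (rule fps_ext) (simp add: fps_nth_inverse_lin_factor_sq inverse_lin_factor algebra_simps)
  finally show ?thesis
    unfolding v_def .
qed

lemma fps_const_prod: "(\<Prod>j\<in>S. fps_const (f j)) = fps_const (\<Prod>j\<in>S. f j)"
  by (induction S rule: infinite_finite_induct) simp_all

lemma fps_const_diff_X_eq_lin_factor:
  fixes c d :: "'a::field"
  assumes "c \<noteq> 0"
  shows "fps_const c - fps_const d * fps_X = fps_const c * lin_factor (d / c)"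
  using assms by (simp add: lin_factor_def algebra_simps flip: fps_const_mult)

definition fps_norm_upto :: "nat \<Rightarrow> 'a::real_normed_vector fps \<Rightarrow> real" where
  "fps_norm_upto n f = (\<Sum>i\<le>n. norm (fps_nth f i))"

lemma fps_norm_upto_nonneg: "0 \<le> fps_norm_upto n f"
  unfolding fps_norm_upto_def by (intro sum_nonneg) simp

lemma norm_fps_nth_le_fps_norm_upto: "norm (fps_nth f n) \<le> fps_norm_upto n f"
  unfolding fps_norm_upto_def by (rule member_le_sum) auto

lemma fps_norm_upto_mult:
  fixes f g :: "'a::real_normed_algebra fps"
  shows "fps_norm_upto n (f * g) \<le> fps_norm_upto n f * fps_norm_upto n g"
proof -
  have "fps_norm_upto n (f * g) \<le> (\<Sum>m\<le>n. \<Sum>i\<le>m. norm (fps_nth f i) * norm (fps_nth g (m - i)))"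
    unfolding fps_norm_upto_def fps_mult_nth
    by (intro sum_mono order.trans[OF norm_sum] order.trans[OF _ sum_mono[OF norm_mult_ineq]])
       (auto simp: atLeast0AtMost)
  also have "\<dots> = (\<Sum>(i,j)\<in>{(i,j). i + j \<le> n}. norm (fps_nth f i) * norm (fps_nth g j))"
    by (rule sum.triangle_reindex_eq [symmetric])
  also have "\<dots> \<le> (\<Sum>(i,j)\<in>{..n}\<times>{..n}. norm (fps_nth f i) * norm (fps_nth g j))"
    by (rule sum_mono2) auto
  also have "\<dots> = fps_norm_upto n f * fps_norm_upto n g"
    unfolding fps_norm_upto_def sum_product sum.cartesian_product ..
  finally show ?thesis .
qed

lemma fps_norm_upto_one [simp]: "fps_norm_upto n (1 :: 'a::real_normed_algebra_1 fps) = 1"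
  unfolding fps_norm_upto_def by (induction n) auto

lemma fps_norm_upto_prod:
  fixes f :: "'b \<Rightarrow> 'a::{real_normed_algebra_1, comm_ring_1} fps"
  shows "fps_norm_upto n (\<Prod>j\<in>S. f j) \<le> (\<Prod>j\<in>S. fps_norm_upto n (f j))"
proof (induction S rule: infinite_finite_induct)
  case (insert x S)
  have "fps_norm_upto n (\<Prod>j\<in>insert x S. f j) \<le> fps_norm_upto n (f x) * fps_norm_upto n (\<Prod>j\<in>S. f j)"
    using insert.hyps fps_norm_upto_mult by simp
  also have "\<dots> \<le> fps_norm_upto n (f x) * (\<Prod>j\<in>S. fps_norm_upto n (f j))"
    by (rule mult_left_mono[OF insert.IH fps_norm_upto_nonneg])
  finally show ?case using insert.hyps by simp
qed simp_all

lemma fps_norm_upto_linear: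
  fixes a b :: "'a::real_normed_algebra_1"
  shows "fps_norm_upto n (fps_const a + fps_const b * fps_X) \<le> norm a + norm b"
  unfolding fps_norm_upto_def
proof (induction n)
  case (Suc n)
  then show ?case by (cases n) (auto simp: fps_mult_left_const_nth)
qed simp

lemma fps_norm_upto_lin_factor:
  "fps_norm_upto n (lin_factor c) \<le> 1 + norm (c :: 'a::real_normed_field)"
proof -
  have "lin_factor c = fps_const 1 + fps_const (- c) * fps_X"
    by (simp add: lin_factor_def)
  then show ?thesis
    using fps_norm_upto_linear[of n 1 "- c"] by simp
qed

lemma fps_norm_upto_inverse_lin_factor:
  fixes c :: "'a::real_normed_field"
  assumes "norm c \<le> 1"
  shows "fps_norm_upto n (inverse (lin_factor c)) \<le> 1 + real n * norm c"
  unfolding fps_norm_upto_def inverse_lin_factor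
proof (induction n)
  case (Suc n)
  have "norm c ^ Suc n \<le> norm c"
    using assms by (simp add: power_le_one mult_left_le)
  with Suc show ?case by (simp add: norm_power algebra_simps)
qed simp

lemma norm_fps_nth_const_mult_le:
  fixes f :: "'a::real_normed_div_algebra fps"
  assumes "fps_norm_upto n f \<le> B"
  shows "norm (fps_nth (fps_const c * f) n) \<le> norm c * B"
  using order.trans[OF norm_fps_nth_le_fps_norm_upto assms]
  by (simp add: fps_mult_left_const_nth norm_mult mult_left_mono)

section \<open>WZ telescoping\<close>

lemma wz_telescoping_sums:
  fixes G F :: "nat \<Rightarrow> nat \<Rightarrow> 'a::real_normed_vector"
  assumes wz: "\<And>i k. G (Suc i) k - G i (Suc k) = F i k - F (Suc i) k"
    and summable: "\<And>k. summable (\<lambda>i. G i k)"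
    and F_lim: "\<And>k. (\<lambda>i. F i k) \<longlonglongrightarrow> 0"
    and tail_lim: "(\<lambda>k. \<Sum>i. G i k) \<longlonglongrightarrow> 0"
  shows "(\<lambda>k. G 0 k + F 0 k) sums (\<Sum>i. G i 0)"
proof -
  define T where "T = (\<lambda>k. \<Sum>i. G i k)"
  have "T k - T (Suc k) = G 0 k + F 0 k" for k
  proof -
    have "(\<lambda>i. G i (Suc k) + (F i k - F (Suc i) k)) sums (T (Suc k) + (F 0 k - 0))"
      unfolding T_def by (intro sums_add summable_sums summable telescope_sums' F_lim)
    moreover have "G i (Suc k) + (F i k - F (Suc i) k) = G (Suc i) k" for i
      using wz[of i k] by (simp add: algebra_simps)
    ultimately have "(\<Sum>i. G (Suc i) k) = T (Suc k) + F 0 k"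
      by (simp add: sums_iff)
    moreover have "(\<Sum>i. G (Suc i) k) = T k - G 0 k"
      unfolding T_def by (rule suminf_split_head[OF summable])
    ultimately show ?thesis by (simp add: algebra_simps)
  qed
  moreover have "(\<lambda>k. T k - T (Suc k)) sums (T 0 - 0)"
    by (rule telescope_sums') (simp add: T_def tail_lim)
  ultimately show ?thesis
    by (simp add: T_def)
qed

lemma summable_inverse_power_Suc:
  assumes "2 \<le> m"
  shows "summable (\<lambda>i. 1 / (real i + 1) ^ m)"
proof -
  have "summable (\<lambda>i. inverse (real (Suc i) ^ m))"
    using inverse_power_summable[OF assms] by (subst summable_Suc_iff)
  then show ?thesis by (simp add: divide_inverse add.commute)
qed

text \<open>The term for \<open>j = 0\<close> is \<open>1 / 0 = 0\<close>, so no hypothesis \<open>0 \<notin> S\<close> is needed.\<close>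

lemma sum_inverse_squares_le_zeta2:
  assumes "finite S"
  shows "(\<Sum>j\<in>S. 1 / real j ^ 2) \<le> zeta_nat 2"
proof -
  have summable: "summable (\<lambda>j. 1 / real j ^ 2)"
    using inverse_power_summable[of 2] by (simp add: divide_inverse)
  have "(\<Sum>j\<in>S. 1 / real j ^ 2) \<le> (\<Sum>j. 1 / real j ^ 2)"
    using assms by (intro sum_le_suminf summable) auto
  also have "\<dots> = zeta_nat 2"
    unfolding zeta_nat_def suminf_split_head[OF summable] by simp
  finally show ?thesis .
qed

section \<open>The WZ pair\<close>

lemma one_le_of_nat_choose: "k \<le> n \<Longrightarrow> 1 \<le> real (n choose k)"
  using zero_less_binomial[of k n] by linarith

lemma central_binomial_Suc:
  "real (2 * Suc k choose Suc k) * (real k + 1) = 2 * (2 * real k + 1) * real (2 * k choose k)"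
proof -
  have a: "(2 * k + 2) * (2 * k + 1 choose k) = (2 * Suc k choose Suc k) * Suc k"
    using Suc_times_binomial_eq[of "2 * k + 1" k] by simp
  have b: "(2 * k + 1) * (2 * k choose k) = (2 * k + 1 choose k) * Suc k"
    using Suc_times_binomial_eq[of "2 * k" k] binomial_symmetric[of "Suc k" "Suc (2 * k)"] by simp
  have "(2 * Suc k choose Suc k) * Suc k * Suc k = 2 * ((2 * k + 1 choose k) * Suc k) * Suc k"
    by (simp only: a[symmetric]) simp
  also have "\<dots> = 2 * (2 * k + 1) * (2 * k choose k) * Suc k"
    by (simp only: b[symmetric] mult.assoc)
  finally have "(2 * Suc k choose Suc k) * Suc k = 2 * (2 * k + 1) * (2 * k choose k)"
    using mult_cancel2[of _ "Suc k"] by (simp only: nat.distinct simp_thms)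
  then have "real ((2 * Suc k choose Suc k) * Suc k) = real (2 * (2 * k + 1) * (2 * k choose k))"
    by (rule arg_cong)
  then show ?thesis
    by (simp add: algebra_simps del: binomial_Suc_Suc)
qed

definition wz_weight :: "nat \<Rightarrow> real" where
  "wz_weight k = (-1) ^ k / (2 * real (2 * k choose k))"

lemma wz_weight_Suc: "wz_weight (Suc k) = - wz_weight k * (real k + 1) / (2 * (2 * real k + 1))"
proof -
  define B where "B = real (2 * Suc k choose Suc k)"
  define C where "C = real (2 * k choose k)"
  have central: "B * (real k + 1) = 2 * (2 * real k + 1) * C"
    unfolding B_def C_def by (rule central_binomial_Suc)
  have "C > 0" "2 * real k + 1 > 0"
    unfolding C_def by simp_all
  have "(-1) ^ Suc k / (2 * B) = (-1) ^ Suc k * (real k + 1) / (2 * (B * (real k + 1)))"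
    by simp
  also have "\<dots> = - ((-1) ^ k / (2 * C)) * (real k + 1) / (2 * (2 * real k + 1))"
    unfolding central using \<open>C > 0\<close> \<open>2 * real k + 1 > 0\<close>
    by (simp add: field_simps) (simp add: add_divide_distrib diff_divide_distrib)
  finally have "(-1) ^ Suc k / (2 * B) = - ((-1) ^ k / (2 * C)) * (real k + 1) / (2 * (2 * real k + 1))" .
  then show ?thesis
    unfolding wz_weight_def B_def C_def .
qed

lemma fps_const_wz_weight:
  "fps_const (wz_weight k) = fps_const (wz_weight k / (2 * (2 * real k + 1))) * (4 * of_nat k + 2)"
proof -
  have "(4 * of_nat k + 2 :: real fps) = fps_const (2 * (2 * real k + 1))"
    by (simp add: fps_of_nat [symmetric] numeral_fps_const algebra_simps)
  moreover have "2 * (2 * real k + 1) \<noteq> 0"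
    by (simp add: add_nonneg_eq_0_iff)
  ultimately show ?thesis
    by (simp flip: fps_const_mult)
qed

lemma fps_const_wz_weight_Suc:
  "fps_const (wz_weight (Suc k)) = - fps_const (wz_weight k / (2 * (2 * real k + 1))) * (of_nat k + 1)"
proof -
  have "(of_nat k + 1 :: real fps) = fps_const (real k + 1)"
    by (simp flip: fps_of_nat)
  moreover have "wz_weight (Suc k) = - (wz_weight k / (2 * (2 * real k + 1))) * (real k + 1)"
    unfolding wz_weight_Suc by simp
  ultimately show ?thesis
    by (simp flip: fps_const_mult fps_const_neg)
qed

definition wz_ratio :: "nat \<Rightarrow> nat \<Rightarrow> real fps" where
  "wz_ratio i k = (\<Prod>l\<in>{1..k}. of_nat l ^ 2 * (of_nat l ^ 2 - 4 * fps_X)) *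
     (\<Prod>j\<in>{i+1..i+k+1}. inverse ((of_nat j ^ 2 - fps_X) ^ 2))"

definition wz_G :: "nat \<Rightarrow> nat \<Rightarrow> real fps" where
  "wz_G i k = fps_const (wz_weight k) * of_nat (2 * i + k + 2) * wz_ratio i k"

definition wz_F :: "nat \<Rightarrow> nat \<Rightarrow> real fps" where
  "wz_F i k = fps_const (wz_weight k / (2 * (2 * real k + 1))) *
     (2 * of_nat (i + k + 2) ^ 2 - 6 * of_nat (k + 1) * of_nat (i + k + 2) + 5 * of_nat (k + 1) ^ 2
       - 2 * fps_X) * wz_ratio i k"

text \<open>Clearing the denominators \<open>((I+1)^2 - X)^2\<close> and \<open>((I+K+2)^2 - X)^2\<close> turns \<open>wz_pair\<close> into
  this polynomial identity.\<close>

lemma wz_certificate_identity: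
  fixes X I K :: "'a::idom"
  shows "2 * (2 * K + 1) * (2 * I + K + 4) * ((I + 1) ^ 2 - X) ^ 2
      + (K + 1) * ((K + 1) ^ 2 * ((K + 1) ^ 2 - 4 * X)) * (2 * I + K + 3)
    = (2 * (I + K + 2) ^ 2 - 6 * (K + 1) * (I + K + 2) + 5 * (K + 1) ^ 2 - 2 * X) * ((I + K + 2) ^ 2 - X) ^ 2
      - (2 * (I + K + 3) ^ 2 - 6 * (K + 1) * (I + K + 3) + 5 * (K + 1) ^ 2 - 2 * X) * ((I + 1) ^ 2 - X) ^ 2"
  by algebra

lemma wz_pair: "wz_G (Suc i) k - wz_G i (Suc k) = wz_F i k - wz_F (Suc i) k"
proof -
  define D :: "nat \<Rightarrow> real fps" where "D = (\<lambda>j. (of_nat j ^ 2 - fps_X) ^ 2)"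
  define N :: "nat \<Rightarrow> real fps" where "N = (\<lambda>l. of_nat l ^ 2 * (of_nat l ^ 2 - 4 * fps_X))"
  define R where "R = (\<Prod>l\<in>{1..k}. N l) * (\<Prod>j\<in>{i+2..i+k+1}. inverse (D j))"
  have D_inverse: "D j * inverse (D j) = 1" if "j > 0" for j
    using that by (intro inverse_mult_eq_1') (simp add: D_def fps_nth_power_0 power_mult [symmetric])
  have ratio_Suc_i: "wz_ratio (Suc i) k = R * inverse (D (i + k + 2))"
  proof -
    have "{Suc i + 1..Suc i + k + 1} = {i + 2..Suc (i + k + 1)}" by auto
    then show ?thesis
      unfolding wz_ratio_def R_def D_def N_def by (simp add: prod.cl_ivl_Suc ac_simps)
  qed
  have ratio_i: "wz_ratio i k = R * inverse (D (i + 1))"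
    unfolding wz_ratio_def R_def D_def N_def by (subst prod.atLeast_Suc_atMost) (auto simp: ac_simps)
  have ratio_Suc_k: "wz_ratio i (Suc k) = R * N (k + 1) * inverse (D (i + 1)) * inverse (D (i + k + 2))"
  proof -
    have "{Suc i + 1..Suc i + k + 1} = {i + 2..Suc (i + k + 1)}" by auto
    then have "(\<Prod>j\<in>{i+1..i+Suc k+1}. inverse (D j)) = inverse (D (i + 1)) * ((\<Prod>j\<in>{i+2..i+k+1}. inverse (D j)) * inverse (D (i + k + 2)))"
      by (subst prod.atLeast_Suc_atMost) (auto simp: prod.cl_ivl_Suc ac_simps)
    then show ?thesis
      unfolding wz_ratio_def R_def D_def N_def by (simp add: prod.cl_ivl_Suc ac_simps)
  qed
  define a where "a = inverse (D (i + 1))"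
  define b where "b = inverse (D (i + k + 2))"
  have "D (i + 1) * a = 1" "D (i + k + 2) * b = 1"
    unfolding a_def b_def by (simp_all add: D_inverse)
  then show ?thesis
    unfolding wz_G_def wz_F_def ratio_Suc_i ratio_i ratio_Suc_k fps_const_wz_weight_Suc
      fps_const_wz_weight [of k] a_def [symmetric] b_def [symmetric]
    using wz_certificate_identity[of "of_nat k :: real fps" "of_nat i" fps_X]
    unfolding D_def N_def
    by (simp only: of_nat_add of_nat_mult of_nat_numeral of_nat_1 of_nat_Suc) algebra
qed

lemma wz_boundary:
  "wz_G 0 k + wz_F 0 k =
     fps_const (wz_weight k / (2 * (2 * real k + 1))) * (5 * of_nat (k + 1) ^ 2 - 2 * fps_X) * wz_ratio 0 k"
  unfolding wz_G_def wz_F_def fps_const_wz_weight [of k]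
  by (simp only: of_nat_add of_nat_mult of_nat_numeral of_nat_1 of_nat_Suc add_0 mult_0_right) algebra

section \<open>Normalisation and coefficient bounds\<close>

definition numer_prod :: "nat \<Rightarrow> real fps" where
  "numer_prod k = (\<Prod>l\<in>{1..k}. lin_factor (4 / real l ^ 2))"

definition denom_prod :: "nat set \<Rightarrow> real fps" where
  "denom_prod S = (\<Prod>j\<in>S. inverse (lin_factor (1 / real j ^ 2) ^ 2))"

definition ratio_const :: "nat \<Rightarrow> nat \<Rightarrow> real" where
  "ratio_const i k = (\<Prod>l\<in>{1..k}. real l ^ 4) * (\<Prod>j\<in>{i+1..i+k+1}. 1 / real j ^ 4)"

lemma wz_ratio_normalized:
  "wz_ratio i k = fps_const (ratio_const i k) * (numer_prod k * denom_prod {i+1..i+k+1})"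
proof -
  have of_nat_sq: "(of_nat j ^ 2 :: real fps) = fps_const (real j ^ 2)" for j
    by (simp flip: fps_of_nat)
  have numer: "of_nat l ^ 2 * (of_nat l ^ 2 - 4 * fps_X) = fps_const (real l ^ 4) * lin_factor (4 / real l ^ 2)"
    if "l > 0" for l
  proof -
    have "(of_nat l ^ 2 - 4 * fps_X :: real fps) = fps_const (real l ^ 2) * lin_factor (4 / real l ^ 2)"
      using that fps_const_diff_X_eq_lin_factor[of "real l ^ 2" 4] by (simp add: of_nat_sq numeral_fps_const)
    then show ?thesis
      by (simp add: of_nat_sq mult.assoc flip: power_mult)
  qed
  have denom: "inverse ((of_nat j ^ 2 - fps_X) ^ 2) = fps_const (1 / real j ^ 4) * inverse (lin_factor (1 / real j ^ 2) ^ 2)"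
    if "j > 0" for j
  proof -
    have "(of_nat j ^ 2 - fps_X :: real fps) = fps_const (real j ^ 2) * lin_factor (1 / real j ^ 2)"
      using that fps_const_diff_X_eq_lin_factor[of "real j ^ 2" 1] by (simp add: of_nat_sq)
    then show ?thesis
      by (simp add: power_mult_distrib fps_inverse_mult fps_const_inverse inverse_eq_divide flip: power_mult)
  qed
  have "(\<Prod>l\<in>{1..k}. of_nat l ^ 2 * (of_nat l ^ 2 - 4 * fps_X))
      = (\<Prod>l\<in>{1..k}. fps_const (real l ^ 4) * lin_factor (4 / real l ^ 2))"
    by (intro prod.cong refl numer) simp
  moreover have "(\<Prod>j\<in>{i+1..i+k+1}. inverse ((of_nat j ^ 2 - fps_X) ^ 2))
      = (\<Prod>j\<in>{i+1..i+k+1}. fps_const (1 / real j ^ 4) * inverse (lin_factor (1 / real j ^ 2) ^ 2))"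
    by (intro prod.cong refl denom) simp
  ultimately have "wz_ratio i k = (\<Prod>l\<in>{1..k}. fps_const (real l ^ 4) * lin_factor (4 / real l ^ 2)) *
      (\<Prod>j\<in>{i+1..i+k+1}. fps_const (1 / real j ^ 4) * inverse (lin_factor (1 / real j ^ 2) ^ 2))"
    unfolding wz_ratio_def by simp
  then show ?thesis
    by (simp add: prod.distrib fps_const_prod numer_prod_def denom_prod_def ratio_const_def ac_simps)
qed

lemma fps_norm_upto_numer_prod: "fps_norm_upto n (numer_prod k) \<le> exp (4 * zeta_nat 2)"
proof -
  have "fps_norm_upto n (numer_prod k) \<le> (\<Prod>l\<in>{1..k}. 1 + 4 / real l ^ 2)"
    unfolding numer_prod_def
    by (intro order.trans[OF fps_norm_upto_prod] prod_mono)
       (auto intro: fps_norm_upto_nonneg order.trans[OF fps_norm_upto_lin_factor])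
  also have "\<dots> \<le> exp (\<Sum>l\<in>{1..k}. 4 / real l ^ 2)"
    by (rule prod_le_exp_sum) auto
  also have "(\<Sum>l\<in>{1..k}. 4 / real l ^ 2) = 4 * (\<Sum>l\<in>{1..k}. 1 / real l ^ 2)"
    by (simp add: sum_distrib_left)
  also have "exp \<dots> \<le> exp (4 * zeta_nat 2)"
    using sum_inverse_squares_le_zeta2[of "{1..k}"] by simp
  finally show ?thesis .
qed

lemma fps_norm_upto_denom_prod:
  assumes "finite S"
  shows "fps_norm_upto n (denom_prod S) \<le> exp (2 * real n * zeta_nat 2)"
proof -
  have factor: "fps_norm_upto n (inverse (lin_factor (1 / real j ^ 2) ^ 2)) \<le> (1 + real n / real j ^ 2) ^ 2"
    for j
  proof -
    have "1 / real j ^ 2 \<le> 1"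
      by (cases "j = 0") (simp_all add: field_simps)
    then have "fps_norm_upto n (inverse (lin_factor (1 / real j ^ 2))) \<le> 1 + real n / real j ^ 2"
      using fps_norm_upto_inverse_lin_factor[of "1 / real j ^ 2" n] by simp
    then have "fps_norm_upto n (inverse (lin_factor (1 / real j ^ 2))) ^ 2 \<le> (1 + real n / real j ^ 2) ^ 2"
      by (intro power_mono) (simp_all add: fps_norm_upto_nonneg)
    moreover have "fps_norm_upto n (inverse (lin_factor (1 / real j ^ 2) ^ 2))
        \<le> fps_norm_upto n (inverse (lin_factor (1 / real j ^ 2))) ^ 2"
      using fps_norm_upto_mult by (simp add: power2_eq_square fps_inverse_mult)
    ultimately show ?thesis
      by linarith
  qed
  have "fps_norm_upto n (denom_prod S) \<le> (\<Prod>j\<in>S. (1 + real n / real j ^ 2) ^ 2)"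
    unfolding denom_prod_def
    by (intro order.trans[OF fps_norm_upto_prod] prod_mono) (auto intro: fps_norm_upto_nonneg factor)
  also have "\<dots> = (\<Prod>j\<in>S. 1 + real n / real j ^ 2) ^ 2"
    by (simp add: prod_power_distrib)
  also have "\<dots> \<le> exp (\<Sum>j\<in>S. real n / real j ^ 2) ^ 2"
    by (intro power_mono prod_le_exp_sum prod_nonneg) auto
  also have "\<dots> = exp (2 * real n * (\<Sum>j\<in>S. 1 / real j ^ 2))"
    by (simp add: sum_distrib_left flip: exp_of_nat_mult)
  also have "\<dots> \<le> exp (2 * real n * zeta_nat 2)"
    using sum_inverse_squares_le_zeta2[OF assms] by (simp add: mult_left_mono)
  finally show ?thesis .
qed

lemma fps_norm_upto_numer_denom_prod:
  assumes "finite S"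
  shows "fps_norm_upto n (numer_prod k * denom_prod S) \<le> exp ((2 * real n + 4) * zeta_nat 2)"
proof -
  have "fps_norm_upto n (numer_prod k * denom_prod S) \<le> exp (4 * zeta_nat 2) * exp (2 * real n * zeta_nat 2)"
    using fps_norm_upto_mult fps_norm_upto_numer_prod fps_norm_upto_denom_prod[OF assms]
    by (meson exp_ge_zero fps_norm_upto_nonneg mult_mono order.trans)
  then show ?thesis
    by (simp add: algebra_simps flip: exp_add)
qed

lemma abs_wz_weight_le: "\<bar>wz_weight k\<bar> \<le> 1 / 2"
proof -
  have "1 \<le> real (2 * k choose k)"
    by (rule one_le_of_nat_choose) simp
  then show ?thesis
    unfolding wz_weight_def by (simp add: abs_div field_simps)
qed

lemma fact_mult_le_prod_atLeastAtMost:
  "fact (Suc k) * (real i + 1) \<le> (\<Prod>j\<in>{i+1..i+k+1}. real j)"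
proof (induction k)
  case (Suc k)
  have "fact (Suc (Suc k)) * (real i + 1) = fact (Suc k) * (real i + 1) * real (k + 2)"
    by (simp add: algebra_simps)
  also have "\<dots> \<le> (\<Prod>j\<in>{i+1..i+k+1}. real j) * real (i + k + 2)"
    using Suc.IH prod_nonneg[of "{i+1..i+k+1}" real] by (intro mult_mono) simp_all
  also have "\<dots> = (\<Prod>j\<in>{i+1..i + Suc k + 1}. real j)"
    by (simp add: prod.cl_ivl_Suc)
  finally show ?case .
qed simp

lemma ratio_const_nonneg: "0 \<le> ratio_const i k"
  unfolding ratio_const_def by (intro mult_nonneg_nonneg prod_nonneg) auto

lemma ratio_const_le: "ratio_const i k \<le> 1 / ((real i + 1) ^ 4 * (real k + 1) ^ 4)"
proof -
  define P where "P = (\<Prod>j\<in>{i+1..i+k+1}. real j)"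
  have lower: "fact k * (real k + 1) * (real i + 1) \<le> P"
    using fact_mult_le_prod_atLeastAtMost[of k i] unfolding P_def by (simp add: algebra_simps)
  have pos: "0 < fact k * (real k + 1) * (real i + 1)"
    by simp
  with lower have "0 < P"
    by linarith
  have "ratio_const i k = fact k ^ 4 / P ^ 4"
    unfolding ratio_const_def P_def
    by (simp add: fact_prod prod_dividef prod_power_distrib [symmetric])
  also have "\<dots> \<le> fact k ^ 4 / (fact k * (real k + 1) * (real i + 1)) ^ 4"
    using lower pos \<open>0 < P\<close> by (intro divide_left_mono power_mono mult_pos_pos) auto
  also have "\<dots> = 1 / ((real i + 1) ^ 4 * (real k + 1) ^ 4)"
    by (simp add: power_mult_distrib)
  finally show ?thesis .
qed

lemma abs_fps_nth_wz_G_le: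
  "\<bar>fps_nth (wz_G i k) n\<bar> \<le> 1 / ((real i + 1) ^ 3 * (real k + 1) ^ 3) * exp ((2 * real n + 4) * zeta_nat 2)"
proof -
  define M where "M = exp ((2 * real n + 4) * zeta_nat 2)"
  define c where "c = wz_weight k * real (2 * i + k + 2) * ratio_const i k"
  have "wz_G i k = fps_const c * (numer_prod k * denom_prod {i+1..i+k+1})"
    unfolding wz_G_def wz_ratio_normalized c_def by (simp add: fps_of_nat [symmetric] ac_simps)
  then have "\<bar>fps_nth (wz_G i k) n\<bar> \<le> \<bar>c\<bar> * M"
    using norm_fps_nth_const_mult_le[OF fps_norm_upto_numer_denom_prod] unfolding M_def by simp
  also have "\<bar>c\<bar> \<le> 1 / ((real i + 1) ^ 3 * (real k + 1) ^ 3)"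
  proof -
    have cube_cancel: "1 / 2 * (2 * a * b) * (1 / (a ^ 4 * b ^ 4)) = 1 / (a ^ 3 * b ^ 3)"
      if "a > 0" "b > 0" for a b :: real
      using that by (simp add: field_simps eval_nat_numeral)
    have "real (2 * i + k + 2) \<le> 2 * (real i + 1) * (real k + 1)"
      by (simp add: algebra_simps)
    then have "\<bar>c\<bar> \<le> 1 / 2 * (2 * (real i + 1) * (real k + 1)) * (1 / ((real i + 1) ^ 4 * (real k + 1) ^ 4))"
      unfolding c_def abs_mult using abs_wz_weight_le ratio_const_le ratio_const_nonneg
      by (intro mult_mono) auto
    also have "\<dots> = 1 / ((real i + 1) ^ 3 * (real k + 1) ^ 3)"
      using cube_cancel[of "real i + 1" "real k + 1"] by simp
    finally show ?thesis .
  qed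
  then have "\<bar>c\<bar> * M \<le> 1 / ((real i + 1) ^ 3 * (real k + 1) ^ 3) * M"
    by (rule mult_right_mono) (simp add: M_def)
  finally show ?thesis
    unfolding M_def .
qed

lemma wz_F_linear_coeff_bound:
  fixes x y :: real
  assumes "0 \<le> x" "0 \<le> y"
  shows "\<bar>2 * (x + y + 2) ^ 2 - 6 * (y + 1) * (x + y + 2) + 5 * (y + 1) ^ 2\<bar> + 2
    \<le> 15 * ((y + 2) ^ 2 * (x + 1) ^ 2)"
proof -
  define m where "m = x + y + 2"
  have m: "y + 1 \<le> m" "1 \<le> m" "m \<le> (y + 2) * (x + 1)"
    unfolding m_def using assms by (auto simp: algebra_simps)
  have "(y + 1) * m \<le> m * m"
    using m by (intro mult_right_mono) auto
  moreover have "(y + 1) ^ 2 \<le> m ^ 2"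
    using m assms by (intro power_mono) auto
  moreover have "1 \<le> m ^ 2"
    using m by simp
  moreover have "\<bar>2 * m ^ 2 - 6 * (y + 1) * m + 5 * (y + 1) ^ 2\<bar> \<le> 2 * m ^ 2 + 6 * ((y + 1) * m) + 5 * (y + 1) ^ 2"
    using m assms by (simp add: abs_le_iff algebra_simps)
  ultimately have "\<bar>2 * m ^ 2 - 6 * (y + 1) * m + 5 * (y + 1) ^ 2\<bar> + 2 \<le> 15 * m ^ 2"
    by (simp add: power2_eq_square)
  also have "\<dots> \<le> 15 * ((y + 2) ^ 2 * (x + 1) ^ 2)"
    using m by (simp add: power_mult_distrib [symmetric] power_mono)
  finally show ?thesis
    unfolding m_def .
qed

lemma abs_fps_nth_wz_F_le:
  "\<bar>fps_nth (wz_F i k) n\<bar> \<le> 15 * (real k + 2) ^ 2 * exp ((2 * real n + 4) * zeta_nat 2) / (real i + 1) ^ 2"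
proof -
  define M where "M = exp ((2 * real n + 4) * zeta_nat 2)"
  define m where "m = real (i + k + 2)"
  define L where "L = 2 * m ^ 2 - 6 * (real k + 1) * m + 5 * (real k + 1) ^ 2"
  define Lam where "Lam = fps_const L + fps_const (-2) * fps_X"
  define c where "c = wz_weight k / (2 * (2 * real k + 1)) * ratio_const i k"
  have "(2 * of_nat (i + k + 2) ^ 2 - 6 * of_nat (k + 1) * of_nat (i + k + 2) + 5 * of_nat (k + 1) ^ 2
      - 2 * fps_X :: real fps) = Lam"
    unfolding Lam_def L_def m_def by (simp add: fps_of_nat [symmetric] numeral_fps_const algebra_simps)
  then have F: "wz_F i k = fps_const c * (Lam * (numer_prod k * denom_prod {i+1..i+k+1}))"
    unfolding wz_F_def wz_ratio_normalized c_def by (simp add: ac_simps)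
  have L: "\<bar>L\<bar> + 2 \<le> 15 * ((real k + 2) ^ 2 * (real i + 1) ^ 2)"
    using wz_F_linear_coeff_bound[of "real i" "real k"] unfolding L_def m_def by (simp add: add_ac)
  have c: "\<bar>c\<bar> \<le> 1 / (real i + 1) ^ 4"
  proof -
    have "\<bar>wz_weight k / (2 * (2 * real k + 1))\<bar> \<le> 1"
      using abs_wz_weight_le[of k] by (simp add: abs_div field_simps)
    then have "\<bar>c\<bar> \<le> ratio_const i k"
      unfolding c_def abs_mult abs_of_nonneg[OF ratio_const_nonneg]
      by (rule mult_left_le_one_le[OF ratio_const_nonneg abs_ge_zero])
    also have "\<dots> \<le> 1 / ((real i + 1) ^ 4 * (real k + 1) ^ 4)"
      by (rule ratio_const_le)
    also have "\<dots> \<le> 1 / (real i + 1) ^ 4"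
      by (intro divide_left_mono) (auto simp: one_le_power)
    finally show ?thesis .
  qed
  have "fps_norm_upto n (Lam * (numer_prod k * denom_prod {i+1..i+k+1}))
      \<le> fps_norm_upto n Lam * fps_norm_upto n (numer_prod k * denom_prod {i+1..i+k+1})"
    by (rule fps_norm_upto_mult)
  also have "\<dots> \<le> (\<bar>L\<bar> + 2) * M"
    using fps_norm_upto_linear[of n L "-2"] fps_norm_upto_numer_denom_prod[of "{i+1..i+k+1}" n k]
    unfolding Lam_def M_def by (intro mult_mono) (simp_all add: fps_norm_upto_nonneg)
  finally have "\<bar>fps_nth (wz_F i k) n\<bar> \<le> \<bar>c\<bar> * ((\<bar>L\<bar> + 2) * M)"
    unfolding F using norm_fps_nth_const_mult_le[of n _ _ c] by simp
  also have "\<dots> \<le> 1 / (real i + 1) ^ 4 * (15 * ((real k + 2) ^ 2 * (real i + 1) ^ 2) * M)"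
    using c L by (intro mult_mono mult_right_mono) (simp_all add: M_def)
  also have "\<dots> = 15 * (real k + 2) ^ 2 * M / (real i + 1) ^ 2"
    by (simp add: power_eq_if)
  finally show ?thesis
    unfolding M_def .
qed

section \<open>The first column and the boundary row\<close>

lemma fps_nth_wz_G_0: "fps_nth (wz_G i 0) n = real (Suc n) / (real i + 1) ^ (2 * n + 3)"
proof -
  define a where "a = real i + 1"
  have "a > 0"
    unfolding a_def by simp
  have "wz_weight 0 * real (2 * i + 0 + 2) * ratio_const i 0 = a / a ^ 4"
    unfolding a_def by (simp add: wz_weight_def ratio_const_def algebra_simps)
  also have "\<dots> = 1 / a ^ 3"
    using \<open>a > 0\<close> by (simp add: eval_nat_numeral)
  finally have "wz_G i 0 = fps_const (1 / a ^ 3) * inverse (lin_factor (1 / a ^ 2) ^ 2)"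
    unfolding wz_G_def wz_ratio_normalized numer_prod_def denom_prod_def a_def
    by (simp add: fps_of_nat [symmetric] ac_simps del: of_nat_add)
  then have "fps_nth (wz_G i 0) n = real (Suc n) * (1 / a ^ 3 * (1 / a ^ 2) ^ n)"
    by (simp add: fps_nth_inverse_lin_factor_sq)
  also have "\<dots> = real (Suc n) / a ^ (2 * n + 3)"
    by (simp add: power_mult power_add power_one_over)
  finally show ?thesis
    unfolding a_def .
qed

lemma numer_prod_eq_compose:
  "numer_prod k = (\<Prod>j\<in>{1..<Suc k}. 1 + fps_const (1 / real j ^ 2) * fps_X) oo (fps_const (-4) * fps_X)"
proof -
  have X: "fps_nth (fps_const (-4) * fps_X :: real fps) 0 = 0"
    by simp
  have "(1 + fps_const (1 / real j ^ 2) * fps_X) oo (fps_const (-4) * fps_X) = lin_factor (4 / real j ^ 2)" for j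
    by (simp add: fps_compose_add_distrib fps_compose_mult_distrib fps_X_fps_compose_startby0[OF X]
        lin_factor_def algebra_simps flip: fps_const_mult)
  then show ?thesis
    unfolding numer_prod_def atLeastLessThanSuc_atLeastAtMost fps_compose_prod_distrib[OF X] by simp
qed

lemma convolution_e_g_coeff:
  "(\<Sum>r=0..m. (-4) ^ r * e_coeff 2 (Suc k) r * g_coeff 2 (Suc k) (m - r))
     = fps_nth (numer_prod k * denom_prod {1..k}) m"
  unfolding fps_mult_nth numer_prod_eq_compose denom_prod_def e_coeff_def g_coeff_def lin_factor_def
  by (simp add: atLeastLessThanSuc_atLeastAtMost)

lemma ratio_const_0: "ratio_const 0 k = 1 / (real k + 1) ^ 4"
proof -
  have "(\<Prod>l\<in>{1..k}. real l) \<noteq> 0"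
    by simp
  then show ?thesis
    unfolding ratio_const_def
    by (simp add: prod.cl_ivl_Suc prod_dividef power_one_over power_mult_distrib add.commute
        flip: prod_power_distrib)
qed

lemma wz_boundary_constant:
  "wz_weight k / (2 * (2 * real k + 1)) * ((real k + 1) ^ 2 * ratio_const 0 k)
     = (-1) ^ k / (2 * (real k + 1) ^ 3 * real (2 * Suc k choose Suc k))"
proof -
  define a where "a = real k + 1"
  define B where "B = real (2 * Suc k choose Suc k)"
  define C where "C = real (2 * k choose k)"
  have central: "B * a = 2 * (2 * real k + 1) * C"
    unfolding B_def C_def a_def by (rule central_binomial_Suc)
  have "a > 0" "C > 0" "2 * real k + 1 > 0"
    unfolding a_def C_def by simp_all
  then have "wz_weight k / (2 * (2 * real k + 1)) * (a ^ 2 * ratio_const 0 k)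
      = (-1) ^ k / (2 * (2 * (2 * real k + 1) * C) * a ^ 2)"
    unfolding ratio_const_0 wz_weight_def a_def [symmetric] C_def [symmetric]
    by (simp add: field_simps eval_nat_numeral)
  also have "\<dots> = (-1) ^ k / (2 * a ^ 3 * B)"
    unfolding central [symmetric] by (simp add: eval_nat_numeral ac_simps)
  finally show ?thesis
    unfolding a_def B_def .
qed

lemma wz_boundary_normalized:
  "wz_G 0 k + wz_F 0 k =
     fps_const ((-1) ^ k / (2 * (real k + 1) ^ 3 * real (2 * Suc k choose Suc k))) *
     (Abs_fps (\<lambda>j. (3 * real j + 5) * (1 / (real k + 1) ^ 2) ^ j) * (numer_prod k * denom_prod {1..k}))"
proof -
  define a where "a = real k + 1"
  have "a > 0"
    unfolding a_def by simp
  have denom: "denom_prod {0+1..0+k+1} = denom_prod {1..k} * inverse (lin_factor (1 / a ^ 2) ^ 2)"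
    unfolding denom_prod_def a_def by (simp add: prod.cl_ivl_Suc add.commute)
  have linear: "5 * of_nat (k + 1) ^ 2 - 2 * fps_X = fps_const (a ^ 2) * (5 - fps_const (2 * (1 / a ^ 2)) * fps_X)"
    using \<open>a > 0\<close> unfolding a_def
    by (simp add: algebra_simps numeral_fps_const fps_of_nat [symmetric] flip: fps_const_mult)
  have const: "wz_weight k / (2 * (2 * real k + 1)) * (a ^ 2 * ratio_const 0 k)
      = (-1) ^ k / (2 * a ^ 3 * real (2 * Suc k choose Suc k))"
    unfolding a_def by (rule wz_boundary_constant)
  have "wz_G 0 k + wz_F 0 k = fps_const (wz_weight k / (2 * (2 * real k + 1))) *
      (fps_const (a ^ 2) * (5 - fps_const (2 * (1 / a ^ 2)) * fps_X)) *
      (fps_const (ratio_const 0 k) * (numer_prod k * (denom_prod {1..k} * inverse (lin_factor (1 / a ^ 2) ^ 2))))"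
    unfolding wz_boundary wz_ratio_normalized denom linear ..
  also have "\<dots> = fps_const (wz_weight k / (2 * (2 * real k + 1)) * (a ^ 2 * ratio_const 0 k)) *
      ((5 - fps_const (2 * (1 / a ^ 2)) * fps_X) * inverse (lin_factor (1 / a ^ 2) ^ 2) *
       (numer_prod k * denom_prod {1..k}))"
    by (simp only: fps_const_mult [symmetric] ac_simps)
  also have "\<dots> = fps_const ((-1) ^ k / (2 * a ^ 3 * real (2 * Suc k choose Suc k))) *
      (Abs_fps (\<lambda>j. (3 * real j + 5) * (1 / a ^ 2) ^ j) * (numer_prod k * denom_prod {1..k}))"
    unfolding const lin_factor_weight_series ..
  finally show ?thesis
    unfolding a_def .
qed

definition zeta_term :: "nat \<Rightarrow> nat \<Rightarrow> nat \<Rightarrow> real" where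
  "zeta_term n j k = (let k' = Suc k in
     (-1) ^ (k' - 1) / (real k' ^ (2 * j + 3) * real (2 * k' choose k')) *
     (\<Sum>r=0..n-j. (-4) ^ r * e_coeff 2 k' r * g_coeff 2 k' (n - j - r)))"

lemma zeta_term_eq:
  "zeta_term n j k = (-1) ^ k / ((real k + 1) ^ (2 * j + 3) * real (2 * Suc k choose Suc k)) *
     fps_nth (numer_prod k * denom_prod {1..k}) (n - j)"
  unfolding zeta_term_def convolution_e_g_coeff Let_def by (simp only: diff_Suc_1 of_nat_Suc add.commute)

lemma fps_nth_wz_boundary:
  "fps_nth (wz_G 0 k + wz_F 0 k) n = (\<Sum>j=0..n. (3 * real j + 5) * zeta_term n j k) / 2"
proof -
  define c where "c = (-1) ^ k / ((real k + 1) ^ 3 * real (2 * Suc k choose Suc k))"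
  define P where "P = numer_prod k * denom_prod {1..k}"
  have "zeta_term n j k = c * (1 / (real k + 1) ^ 2) ^ j * fps_nth P (n - j)" for j
    unfolding zeta_term_eq c_def P_def by (simp add: power_add power_mult power_one_over)
  then have "(\<Sum>j=0..n. (3 * real j + 5) * zeta_term n j k)
      = c * (\<Sum>j=0..n. (3 * real j + 5) * (1 / (real k + 1) ^ 2) ^ j * fps_nth P (n - j))"
    by (simp add: sum_distrib_left ac_simps)
  also have "\<dots> = c * fps_nth (Abs_fps (\<lambda>j. (3 * real j + 5) * (1 / (real k + 1) ^ 2) ^ j) * P) n"
    by (simp add: fps_mult_nth)
  also have "\<dots> = 2 * fps_nth (wz_G 0 k + wz_F 0 k) n"
    unfolding wz_boundary_normalized c_def P_def by (simp add: fps_mult_left_const_nth del: binomial_Suc_Suc)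
  finally show ?thesis
    by simp
qed

lemma summable_zeta_term: "summable (zeta_term n j)"
proof (rule summable_comparison_test')
  define M where "M = exp ((2 * real (n - j) + 4) * zeta_nat 2)"
  show "summable (\<lambda>k. M * (1 / (real k + 1) ^ 3))"
    by (intro summable_mult summable_inverse_power_Suc) simp
  show "norm (zeta_term n j k) \<le> M * (1 / (real k + 1) ^ 3)" for k
  proof -
    define D where "D = (real k + 1) ^ (2 * j + 3) * real (2 * Suc k choose Suc k)"
    have "(real k + 1) ^ 3 * 1 \<le> D"
      unfolding D_def using one_le_of_nat_choose[of "Suc k" "2 * Suc k"]
      by (intro mult_mono power_increasing) simp_all
    moreover have "0 < (real k + 1) ^ 3"
      by simp
    ultimately have "1 / D \<le> 1 / (real k + 1) ^ 3"
      by (intro divide_left_mono mult_pos_pos; linarith)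
    moreover have "\<bar>fps_nth (numer_prod k * denom_prod {1..k}) (n - j)\<bar> \<le> M"
      using order.trans[OF norm_fps_nth_le_fps_norm_upto fps_norm_upto_numer_denom_prod[of "{1..k}" "n - j" k]]
      unfolding M_def by simp
    ultimately have "1 / D * \<bar>fps_nth (numer_prod k * denom_prod {1..k}) (n - j)\<bar> \<le> 1 / (real k + 1) ^ 3 * M"
      by (intro mult_mono) simp_all
    moreover have "norm (zeta_term n j k) = 1 / D * \<bar>fps_nth (numer_prod k * denom_prod {1..k}) (n - j)\<bar>"
      unfolding zeta_term_eq D_def by (simp add: abs_mult)
    ultimately show ?thesis
      by (simp add: mult.commute)
  qed
qed

lemma summable_fps_nth_wz_G: "summable (\<lambda>i. fps_nth (wz_G i k) n)"
proof (rule summable_comparison_test')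
  define M where "M = exp ((2 * real n + 4) * zeta_nat 2) / (real k + 1) ^ 3"
  show "summable (\<lambda>i. M * (1 / (real i + 1) ^ 3))"
    by (intro summable_mult summable_inverse_power_Suc) simp
  show "norm (fps_nth (wz_G i k) n) \<le> M * (1 / (real i + 1) ^ 3)" for i
    using abs_fps_nth_wz_G_le[of i k n] unfolding M_def by (simp add: mult.commute)
qed

lemma suminf_fps_nth_wz_G_tendsto_0: "(\<lambda>k. \<Sum>i. fps_nth (wz_G i k) n) \<longlonglongrightarrow> 0"
proof (rule Lim_null_comparison)
  define M where "M = exp ((2 * real n + 4) * zeta_nat 2)"
  define S where "S = (\<Sum>i. 1 / (real i + 1) ^ 3)"
  have summable: "summable (\<lambda>i. 1 / (real i + 1) ^ 3)"
    by (rule summable_inverse_power_Suc) simp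
  show "\<forall>\<^sub>F k in sequentially. norm (\<Sum>i. fps_nth (wz_G i k) n) \<le> M * S * (1 / (real k + 1) ^ 3)"
  proof (intro always_eventually allI)
    fix k
    have "norm (\<Sum>i. fps_nth (wz_G i k) n) \<le> (\<Sum>i. M / (real k + 1) ^ 3 * (1 / (real i + 1) ^ 3))"
      using abs_fps_nth_wz_G_le[of _ k n] summable
      by (intro norm_suminf_le summable_mult) (simp_all add: M_def mult.commute)
    also have "\<dots> = M * S * (1 / (real k + 1) ^ 3)"
      unfolding S_def suminf_mult[OF summable] by simp
    finally show "norm (\<Sum>i. fps_nth (wz_G i k) n) \<le> M * S * (1 / (real k + 1) ^ 3)" .
  qed
  show "(\<lambda>k. M * S * (1 / (real k + 1) ^ 3)) \<longlonglongrightarrow> 0"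
    by (intro tendsto_mult_right_zero summable_LIMSEQ_zero summable)
qed

lemma fps_nth_wz_F_tendsto_0: "(\<lambda>i. fps_nth (wz_F i k) n) \<longlonglongrightarrow> 0"
proof (rule Lim_null_comparison)
  define M where "M = 15 * (real k + 2) ^ 2 * exp ((2 * real n + 4) * zeta_nat 2)"
  show "\<forall>\<^sub>F i in sequentially. norm (fps_nth (wz_F i k) n) \<le> M * (1 / (real i + 1) ^ 2)"
    using abs_fps_nth_wz_F_le[of _ k n] unfolding M_def by (intro always_eventually allI) simp
  show "(\<lambda>i. M * (1 / (real i + 1) ^ 2)) \<longlonglongrightarrow> 0"
    by (intro tendsto_mult_right_zero summable_LIMSEQ_zero summable_inverse_power_Suc) simp
qed

lemma suminf_fps_nth_wz_G_0: "(\<Sum>i. fps_nth (wz_G i 0) n) = real (Suc n) * zeta_nat (2 * n + 3)"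
  unfolding fps_nth_wz_G_0 zeta_nat_def
  using suminf_mult[OF summable_inverse_power_Suc[of "2 * n + 3"], of "real (Suc n)"]
  by (simp add: add.commute)

lemma zeta_term_series_sums:
  "(\<lambda>k. \<Sum>j=0..n. (3 * real j + 5) * zeta_term n j k) sums (2 * real (Suc n) * zeta_nat (2 * n + 3))"
proof -
  have "(\<lambda>k. fps_nth (wz_G 0 k) n + fps_nth (wz_F 0 k) n) sums (\<Sum>i. fps_nth (wz_G i 0) n)"
    using arg_cong[OF wz_pair, of "\<lambda>f. fps_nth f n"]
    by (intro wz_telescoping_sums summable_fps_nth_wz_G fps_nth_wz_F_tendsto_0
        suminf_fps_nth_wz_G_tendsto_0) simp
  then have "(\<lambda>k. 2 * fps_nth (wz_G 0 k + wz_F 0 k) n) sums (2 * (real (Suc n) * zeta_nat (2 * n + 3)))"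
    unfolding suminf_fps_nth_wz_G_0 by (intro sums_mult) simp
  moreover have "(\<lambda>k. 2 * fps_nth (wz_G 0 k + wz_F 0 k) n) = (\<lambda>k. \<Sum>j=0..n. (3 * real j + 5) * zeta_term n j k)"
    by (simp only: fps_nth_wz_boundary) simp
  ultimately show ?thesis
    by (simp add: algebra_simps)
qed

theorem corollary3:
  fixes n :: nat
  shows "zeta_nat (2*n+3) =
    1 / (2 * real n + 2) *
    (\<Sum>j=0..n. (3 * real j + 5) *
      (\<Sum>k. let k' = Suc k in
         (-1) ^ (k' - 1) / (real k' ^ (2*j+3) * real (2*k' choose k')) *
         (\<Sum>r=0..n-j. (-4) ^ r * e_coeff 2 k' r * g_coeff 2 k' (n - j - r))))"
proof -
  have inner: "(\<lambda>k. let k' = Suc k in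
      (-1) ^ (k' - 1) / (real k' ^ (2*j+3) * real (2*k' choose k')) *
      (\<Sum>r=0..n-j. (-4) ^ r * e_coeff 2 k' r * g_coeff 2 k' (n - j - r))) = zeta_term n j" for j
    by (simp add: fun_eq_iff zeta_term_def)
  have "(\<Sum>j=0..n. (3 * real j + 5) * (\<Sum>k. zeta_term n j k))
      = (\<Sum>k. \<Sum>j=0..n. (3 * real j + 5) * zeta_term n j k)"
    by (simp add: suminf_sum summable_mult summable_zeta_term suminf_mult)
  also have "\<dots> = (2 * real n + 2) * zeta_nat (2 * n + 3)"
    using sums_unique[OF zeta_term_series_sums] by (simp add: algebra_simps)
  finally show ?thesis
    unfolding inner by simp
qed

end
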